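(* Let $U$ be a unicyclic graph with an edge $\ell u\in E(U)$ such that $\deg(\ell)=1$ and $u\in V(\operatorname{Cycles}(U))$. (i) If $v\in V(\operatorname{Cycles}(U))$, $v\neq u$ and $\deg(v)>2$, then there exists a u-switch $\tau$ over $U$ such that $\ell v\in E(\tau(U))$. (ii) If $v\notin V(\operatorname{Cycles}(U))$ and $\deg(v)\ge2$, then there exists a u-switch $\tau$ over $U$ such that $\ell v\in E(\tau(U))$.
   Context: Graphs are finite, simple, undirected, labeled. A unicyclic graph is a connected graph with exactly one cycle. For vertices $a,b,c,d$, $A=\binom{a\ b}{c\ d}$ is interchangeable in $G$ if $ab,cd\in E(G)$, $\{a,b\}\cap\{c,d\}=\varnothing$, $ac,bd\notin E(G)$; the 2-switch $\tau_A$ sends $G$ to $G-ab-cd+ac+bd$ if $A$ is interchangeable and to $G$ otherwise (trivial). A nontrivial 2-switch $\tau$ over a unicyclic $U$ is a u-switch if $\tau(U)$ is unicyclic. $\operatorname{Cycles}(G)$ is the subgraph induced by vertices lying on some cycle of $G$. *)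

theory Defs
  imports Main
begin

definition simple_graph :: "'a set \<Rightarrow> 'a set set \<Rightarrow> bool" where
  "simple_graph V E \<longleftrightarrow> finite V \<and>
     (\<forall>e\<in>E. \<exists>x y. e = {x, y} \<and> x \<noteq> y \<and> x \<in> V \<and> y \<in> V)"

definition connected_graph :: "'a set \<Rightarrow> 'a set set \<Rightarrow> bool" where
  "connected_graph V E \<longleftrightarrow>
     (\<forall>x\<in>V. \<forall>y\<in>V. (\<lambda>a b. {a, b} \<in> E)\<^sup>*\<^sup>* x y)"

definition degree :: "'a set set \<Rightarrow> 'a \<Rightarrow> nat" where
  "degree E v = card {e \<in> E. v \<in> e}"

text \<open>A cycle of G, given by its edge set: the edges of a closed path through
 at least 3 distinct vertices.\<close>

definition is_cycle :: "'a set set \<Rightarrow> 'a set set \<Rightarrow> bool" where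
  "is_cycle E C \<longleftrightarrow> (\<exists>vs. length vs \<ge> 3 \<and> distinct vs \<and>
      C = {{vs ! i, vs ! ((i + 1) mod length vs)} | i. i < length vs} \<and> C \<subseteq> E)"

definition unicyclic :: "'a set \<Rightarrow> 'a set set \<Rightarrow> bool" where
  "unicyclic V E \<longleftrightarrow> simple_graph V E \<and> connected_graph V E \<and> (\<exists>!C. is_cycle E C)"

definition cycle_vertices :: "'a set set \<Rightarrow> 'a set" where
  "cycle_vertices E = \<Union>{\<Union>C | C. is_cycle E C}"

definition interchangeable :: "'a set set \<Rightarrow> 'a \<Rightarrow> 'a \<Rightarrow> 'a \<Rightarrow> 'a \<Rightarrow> bool" where
  "interchangeable E a b c d \<longleftrightarrow> {a, b} \<in> E \<and> {c, d} \<in> E \<and> {a, b} \<inter> {c, d} = {}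
      \<and> {a, c} \<notin> E \<and> {b, d} \<notin> E"

definition two_switch :: "'a set set \<Rightarrow> 'a \<Rightarrow> 'a \<Rightarrow> 'a \<Rightarrow> 'a \<Rightarrow> 'a set set" where
  "two_switch E a b c d =
     (if interchangeable E a b c d then (E - {{a, b}, {c, d}}) \<union> {{a, c}, {b, d}} else E)"

definition u_switch :: "'a set \<Rightarrow> 'a set set \<Rightarrow> 'a \<Rightarrow> 'a \<Rightarrow> 'a \<Rightarrow> 'a \<Rightarrow> bool" where
  "u_switch V E a b c d \<longleftrightarrow> unicyclic V E \<and> interchangeable E a b c d
      \<and> unicyclic V (two_switch E a b c d)"

end

(* The u-switch is the 2-switch (l u / v w) for an edge v w at v such that, once v w is deleted,
   the component of w contains neither v nor u.  It replaces l u and v w by l v and u w: l becomes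
   a leaf at v and the side of w is re-attached at u, so the graph stays connected; neither deleted
   edge lies on a cycle, so the cycle of U survives.

   Such an edge exists in both cases.  (i) The cycle accounts for only two edges at v, so some
   edge v w is off the cycle, hence a bridge, and u stays on the side of v because both lie on
   the cycle.  (ii) Every edge at v is a bridge; if u lay beyond two of them, v x and v y, then x
   and y would be joined avoiding v, closing a cycle through v. *)

theory Submission
  imports Defs "HOL-Library.Transitive_Closure_Table"
begin

definition reachable :: "'a set set \<Rightarrow> 'a \<Rightarrow> 'a \<Rightarrow> bool" where
  "reachable F = (\<lambda>a b. {a, b} \<in> F)\<^sup>*\<^sup>*"

lemma reachable_refl [simp]: "reachable F a a"
  by (simp add: reachable_def)

lemma reachable_edge: "{a, b} \<in> F \<Longrightarrow> reachable F a b"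
  by (simp add: reachable_def r_into_rtranclp)

lemma reachable_trans: "reachable F a b \<Longrightarrow> reachable F b c \<Longrightarrow> reachable F a c"
  unfolding reachable_def by (rule rtranclp_trans)

lemma reachable_sym:
  assumes "reachable F a b"
  shows "reachable F b a"
proof -
  have "symp (\<lambda>a b. {a, b} \<in> F)"
    by (simp add: symp_def insert_commute)
  then show ?thesis
    using assms unfolding reachable_def by (metis symp_rtranclp sympD)
qed

lemma connected_graph_iff_reachable:
  "connected_graph V E \<longleftrightarrow> (\<forall>x\<in>V. \<forall>y\<in>V. reachable E x y)"
  by (simp add: connected_graph_def reachable_def)

lemma reachable_simulate:
  assumes "reachable F a b" and "\<And>x y. {x, y} \<in> F \<Longrightarrow> reachable H x y"
  shows "reachable H a b"
  using assms(1) unfolding reachable_def[of F]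
  by (induction rule: rtranclp_induct) (auto intro: reachable_trans assms(2))

lemma reachable_mono: "F \<subseteq> H \<Longrightarrow> reachable F a b \<Longrightarrow> reachable H a b"
  by (auto intro: reachable_simulate reachable_edge)

lemma reachable_closed:
  assumes "reachable F a b" and "a \<in> S" and "\<And>x y. {x, y} \<in> F \<Longrightarrow> x \<in> S \<Longrightarrow> y \<in> S"
  shows "b \<in> S"
  using assms(1) unfolding reachable_def
  by (induction rule: rtranclp_induct) (auto intro: assms(2,3))

lemma reachable_from_isolated:
  assumes "\<And>y. {x, y} \<notin> F" and "reachable F x z"
  shows "z = x"
proof -
  have "z \<in> {x}"
    using assms(2) by (rule reachable_closed) (use assms(1) in auto)
  then show ?thesis
    by simp
qed

lemma reachable_Diff_edge_cases:
  assumes "reachable F a b"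
  shows "reachable (F - {{p, q}}) a b \<or> reachable (F - {{p, q}}) a p \<or> reachable (F - {{p, q}}) a q"
  using assms unfolding reachable_def[of F]
proof (induction rule: rtranclp_induct)
  case (step y z)
  show ?case
  proof (cases "{y, z} = {p, q}")
    case True
    then have "y = p \<or> y = q"
      by (auto simp: doubleton_eq_iff)
    then show ?thesis
      using step.IH by auto
  next
    case False
    then have yz: "reachable (F - {{p, q}}) y z"
      using step.hyps(2) by (simp add: reachable_edge)
    show ?thesis
      using step.IH reachable_trans[OF _ yz] by blast
  qed
qed simp

lemma reachable_Diff_unreached_edge:
  assumes "reachable F a b" and "\<not> reachable F a p"
  shows "reachable (F - {{p, q}}) a b"
proof (cases "{p, q} \<in> F")
  case True
  then have "\<not> reachable F a q"
    using assms(2) reachable_trans[OF _ reachable_edge[of q p F]] by (auto simp: insert_commute)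
  then show ?thesis
    using reachable_Diff_edge_cases[OF assms(1), of p q] assms(2) reachable_mono[of "F - {{p, q}}" F a]
    by blast
qed (simp add: assms(1))

lemma reachable_along:
  assumes "\<And>m. j \<le> m \<Longrightarrow> m < k \<Longrightarrow> {xs ! m, xs ! Suc m} \<in> F" and "j \<le> k"
  shows "reachable F (xs ! j) (xs ! k)"
  using assms
proof (induction k)
  case (Suc k)
  show ?case
  proof (cases "j = Suc k")
    case False
    then have "reachable F (xs ! j) (xs ! k)"
      using Suc by simp
    moreover have "{xs ! k, xs ! Suc k} \<in> F"
      using Suc.prems False by simp
    ultimately show ?thesis
      by (blast intro: reachable_trans reachable_edge)
  qed simp
qed simp

lemma is_cycle_mono: "is_cycle G C \<Longrightarrow> C \<subseteq> H \<Longrightarrow> is_cycle H C"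
  unfolding is_cycle_def by blast

lemma is_cycle_vertex_list:
  assumes "is_cycle G C"
  obtains vs where "length vs \<ge> 3" and "distinct vs" and "\<Union>C \<subseteq> set vs"
    and "\<And>m. Suc m < length vs \<Longrightarrow> {vs ! m, vs ! Suc m} \<in> C"
    and "{vs ! (length vs - 1), vs ! 0} \<in> C"
proof -
  obtain vs where len: "length vs \<ge> 3" and dist: "distinct vs"
    and C: "C = {{vs ! i, vs ! ((i + 1) mod length vs)} | i. i < length vs}"
    using assms unfolding is_cycle_def by blast
  have "\<Union>C \<subseteq> set vs"
    unfolding C by (auto intro!: nth_mem mod_less_divisor)
  moreover have "{vs ! m, vs ! Suc m} \<in> C" if "Suc m < length vs" for m
    using that unfolding C by force
  moreover have "{vs ! (length vs - 1), vs ! 0} \<in> C"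
  proof -
    have "length vs - 1 + 1 = length vs" and last: "length vs - 1 < length vs"
      using len by auto
    then have "(length vs - 1 + 1) mod length vs = 0"
      by simp
    with last show ?thesis
      unfolding C by force
  qed
  ultimately show ?thesis
    by (rule that[OF len dist])
qed

lemma distinct_consecutive_pairs_eq:
  assumes "distinct vs" and "Suc m < length vs" and "Suc i < length vs"
    and "{vs ! m, vs ! Suc m} = {vs ! i, vs ! Suc i}"
  shows "m = i"
  using assms by (auto simp: doubleton_eq_iff nth_eq_iff_index_eq)

lemma distinct_closing_pair_ne:
  assumes "distinct vs" and "length vs \<ge> 3" and "Suc i < length vs"
  shows "{vs ! (length vs - 1), vs ! 0} \<noteq> {vs ! i, vs ! Suc i}"
proof
  assume "{vs ! (length vs - 1), vs ! 0} = {vs ! i, vs ! Suc i}"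
  then have "vs ! (length vs - 1) \<in> {vs ! i, vs ! Suc i}" and "vs ! 0 \<in> {vs ! i, vs ! Suc i}"
    by auto
  moreover have "length vs - 1 < length vs" and "0 < length vs" and "i < length vs"
    using assms(2,3) by auto
  ultimately have "length vs - 1 \<in> {i, Suc i}" and "0 \<in> {i, Suc i}"
    using nth_eq_iff_index_eq[OF assms(1)] assms(3) by auto
  then show False
    using assms(2,3) by auto
qed

lemma cycle_reachable_without_edge:
  assumes "is_cycle G C" and "a \<in> \<Union>C" and "b \<in> \<Union>C"
  shows "reachable (C - {e}) a b"
proof -
  obtain vs where len: "length vs \<ge> 3" and dist: "distinct vs" and vertices: "\<Union>C \<subseteq> set vs"
    and path_edge: "\<And>m. Suc m < length vs \<Longrightarrow> {vs ! m, vs ! Suc m} \<in> C"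
    and closing_edge: "{vs ! (length vs - 1), vs ! 0} \<in> C"
    by (rule is_cycle_vertex_list[OF assms(1)]) blast
  define n where "n = length vs"
  txt \<open>If e joins vs ! i and vs ! Suc i, the vertices up to i reach vs ! 0 along the list and the
    later ones reach it through the closing edge.\<close>
  have index_to_first: "reachable (C - {e}) (vs ! k) (vs ! 0)" if "k < n" for k
  proof (cases "\<exists>i. Suc i < n \<and> e = {vs ! i, vs ! Suc i}")
    case False
    then have "reachable (C - {e}) (vs ! 0) (vs ! k)"
      using that path_edge unfolding n_def by (intro reachable_along) force+
    then show ?thesis
      by (rule reachable_sym)
  next
    case True
    then obtain i where i: "Suc i < n" "e = {vs ! i, vs ! Suc i}"
      by blast
    have other_edge: "{vs ! m, vs ! Suc m} \<in> C - {e}" if "Suc m < n" "m \<noteq> i" for m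
      using that i path_edge distinct_consecutive_pairs_eq[OF dist] unfolding n_def by blast
    show ?thesis
    proof (cases "k \<le> i")
      case True
      then have "reachable (C - {e}) (vs ! 0) (vs ! k)"
        using i(1) other_edge by (intro reachable_along) auto
      then show ?thesis
        by (rule reachable_sym)
    next
      case False
      then have "reachable (C - {e}) (vs ! k) (vs ! (n - 1))"
        using that other_edge by (intro reachable_along) auto
      moreover have "{vs ! (n - 1), vs ! 0} \<in> C - {e}"
        using closing_edge distinct_closing_pair_ne[OF dist len] i unfolding n_def by simp
      ultimately show ?thesis
        by (rule reachable_trans[OF _ reachable_edge])
    qed
  qed
  have to_first: "reachable (C - {e}) x (vs ! 0)" if "x \<in> \<Union>C" for x
    using that vertices index_to_first unfolding n_def by (metis in_set_conv_nth subsetD)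
  show ?thesis
    using reachable_trans[OF to_first[OF assms(2)] reachable_sym[OF to_first[OF assms(3)]]] .
qed

lemma reachable_without_cycle_edge:
  assumes "is_cycle G C" and "{x, y} \<in> C"
  shows "reachable (G - {{x, y}}) x y"
proof -
  have "reachable (C - {{x, y}}) x y"
    using assms(2) by (intro cycle_reachable_without_edge[OF assms(1)]) auto
  moreover have "C - {{x, y}} \<subseteq> G - {{x, y}}"
    using assms(1) unfolding is_cycle_def by blast
  ultimately show ?thesis
    by (simp add: reachable_mono)
qed

lemma closed_path_is_cycle:
  assumes path: "rtrancl_path (\<lambda>a b. {a, b} \<in> G) y ys x" and dist: "distinct (y # ys)"
    and len: "length ys \<ge> 2" and xy: "{x, y} \<in> G"
  obtains C where "is_cycle G C" and "{x, y} \<in> C"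
proof -
  let ?vs = "y # ys"
  let ?n = "length ?vs"
  have "ys \<noteq> []"
    using len by auto
  then have vs_last: "?vs ! (?n - 1) = x"
    using rtrancl_path_last[OF path] by (simp add: last_conv_nth)
  define C where "C = {{?vs ! i, ?vs ! ((i + 1) mod ?n)} | i. i < ?n}"
  have "C \<subseteq> G"
  proof
    fix e assume "e \<in> C"
    then obtain i where i: "i < ?n" "e = {?vs ! i, ?vs ! ((i + 1) mod ?n)}"
      unfolding C_def by blast
    show "e \<in> G"
    proof (cases "i + 1 < ?n")
      case True
      then show ?thesis
        using i(2) rtrancl_path_nth[OF path, of i] by simp
    next
      case False
      then have "i = ?n - 1"
        using i(1) by simp
      then show ?thesis
        using i(2) vs_last xy by (simp add: insert_commute)
    qed
  qed
  moreover have "?n \<ge> 3"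
    using len by simp
  ultimately have "is_cycle G C"
    unfolding is_cycle_def C_def using dist by blast
  moreover have "{?vs ! (?n - 1), ?vs ! ((?n - 1 + 1) mod ?n)} \<in> C"
    unfolding C_def by force
  ultimately show ?thesis
    using that vs_last by simp
qed

lemma cycle_through_edge:
  assumes xy: "{x, y} \<in> G" "x \<noteq> y" and reach: "reachable (G - {{x, y}}) y x"
  obtains C where "is_cycle G C" and "{x, y} \<in> C"
proof -
  let ?R = "\<lambda>a b. {a, b} \<in> G - {{x, y}}"
  obtain ys where path: "rtrancl_path ?R y ys x" and dist: "distinct (y # ys)"
    using reach rtrancl_path_distinct unfolding reachable_def rtranclp_eq_rtrancl_path by metis
  have "length ys \<ge> 2"
  proof (rule ccontr)
    assume short: "\<not> length ys \<ge> 2"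
    have "ys \<noteq> []"
      using path xy(2) by (auto elim: rtrancl_path.cases)
    with short obtain z where "ys = [z]"
      by (cases ys) (auto simp: not_less_eq_eq)
    moreover have "last ys = x"
      using rtrancl_path_last[OF path \<open>ys \<noteq> []\<close>] .
    ultimately have "?R y x"
      using rtrancl_path_nth[OF path, of 0] by simp
    then show False
      by (simp add: insert_commute)
  qed
  moreover have "rtrancl_path (\<lambda>a b. {a, b} \<in> G) y ys x"
    using path by (rule rtrancl_path_mono) simp
  ultimately show ?thesis
    using closed_path_is_cycle[OF _ dist _ xy(1)] that by blast
qed

lemma Suc_mod_eq_imp_eq: "Suc i mod n = Suc j mod n \<Longrightarrow> i < n \<Longrightarrow> j < n \<Longrightarrow> i = j"
  by (metis Suc_lessI mod_less mod_self nat.distinct(1) nat.inject)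

lemma distinct_card_indices_le_1:
  fixes f :: "nat \<Rightarrow> nat"
  assumes "distinct vs" and "\<And>i. i < n \<Longrightarrow> f i < length vs"
    and "\<And>i j. i < n \<Longrightarrow> j < n \<Longrightarrow> f i = f j \<Longrightarrow> i = j"
  shows "card {i. i < n \<and> vs ! f i = x} \<le> 1"
proof -
  have "i = j" if "i < n" "j < n" "vs ! f i = x" "vs ! f j = x" for i j
    using that assms nth_eq_iff_index_eq[OF assms(1), of "f i" "f j"] by simp
  moreover have "finite {i. i < n \<and> vs ! f i = x}"
    by simp
  ultimately show ?thesis
    by (auto simp: card_le_Suc0_iff_eq)
qed

lemma cycle_degree_le_2:
  assumes "is_cycle G C"
  shows "card {e \<in> C. x \<in> e} \<le> 2"
proof -
  obtain vs where dist: "distinct vs"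
    and C: "C = {{vs ! i, vs ! ((i + 1) mod length vs)} | i. i < length vs}"
    using assms unfolding is_cycle_def by blast
  define n where "n = length vs"
  define I where "I = {i. i < n \<and> vs ! i = x}"
  define J where "J = {i. i < n \<and> vs ! ((i + 1) mod n) = x}"
  have "card I \<le> 1"
    using distinct_card_indices_le_1[OF dist, of n id x] unfolding I_def n_def by simp
  moreover have "card J \<le> 1"
  proof -
    have "Suc i mod n < n" if "i < n" for i
      using that by (cases n) auto
    then show ?thesis
      unfolding J_def n_def
      by (intro distinct_card_indices_le_1[OF dist]) (auto intro: Suc_mod_eq_imp_eq)
  qed
  moreover have "card {e \<in> C. x \<in> e} \<le> card (I \<union> J)"
  proof -
    have fin: "finite (I \<union> J)"
      unfolding I_def J_def by auto
    have "{e \<in> C. x \<in> e} \<subseteq> (\<lambda>i. {vs ! i, vs ! ((i + 1) mod n)}) ` (I \<union> J)"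
      unfolding C I_def J_def n_def by auto
    then have "card {e \<in> C. x \<in> e} \<le> card ((\<lambda>i. {vs ! i, vs ! ((i + 1) mod n)}) ` (I \<union> J))"
      using fin by (intro card_mono) auto
    also have "\<dots> \<le> card (I \<union> J)"
      using fin by (rule card_image_le)
    finally show ?thesis .
  qed
  ultimately show ?thesis
    using card_Un_le[of I J] by linarith
qed

lemma simple_graph_edge:
  "simple_graph V E \<Longrightarrow> {a, b} \<in> E \<Longrightarrow> a \<in> V \<and> b \<in> V \<and> a \<noteq> b"
  unfolding simple_graph_def by (metis doubleton_eq_iff)

lemma simple_graph_edge_at:
  assumes "simple_graph V E" and "e \<in> E" and "v \<in> e"
  obtains w where "e = {v, w}" and "v \<noteq> w"
proof -
  obtain x y where "e = {x, y}" and "x \<noteq> y"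
    using assms(1,2) unfolding simple_graph_def by blast
  then show ?thesis
    using that assms(3) by (auto simp: insert_commute)
qed

lemma simple_graph_finite_edges:
  assumes "simple_graph V E"
  shows "finite E"
proof -
  have "E \<subseteq> Pow V" and "finite V"
    using assms unfolding simple_graph_def by auto
  then show ?thesis
    by (simp add: finite_subset)
qed

lemma simple_graph_two_switch:
  assumes "simple_graph V E"
  shows "simple_graph V (two_switch E a b c d)"
proof (cases "interchangeable E a b c d")
  case True
  then have new: "a \<in> V" "b \<in> V" "c \<in> V" "d \<in> V" "a \<noteq> c" "b \<noteq> d"
    using simple_graph_edge[OF assms] unfolding interchangeable_def by blast+
  show ?thesis
    unfolding simple_graph_def
  proof (intro conjI ballI)
    show "finite V"
      using assms unfolding simple_graph_def by simp
  next
    fix e assume "e \<in> two_switch E a b c d"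
    then have "e \<in> E \<or> e = {a, c} \<or> e = {b, d}"
      using True unfolding two_switch_def by auto
    then show "\<exists>x y. e = {x, y} \<and> x \<noteq> y \<and> x \<in> V \<and> y \<in> V"
      using assms new unfolding simple_graph_def by blast
  qed
qed (simp add: assms two_switch_def)

lemma degree_one_neighbour:
  assumes "simple_graph V E" and "degree E l = 1" and "{l, u} \<in> E" and "{l, x} \<in> E"
  shows "x = u"
proof -
  obtain e where e: "{e \<in> E. l \<in> e} = {e}"
    using assms(2) unfolding degree_def by (rule card_1_singletonE)
  have "{l, x} \<in> {e \<in> E. l \<in> e}" and "{l, u} \<in> {e \<in> E. l \<in> e}"
    using assms(3,4) by simp_all
  then have "{l, x} = {l, u}"
    unfolding e by simp
  then show ?thesis
    using simple_graph_edge[OF assms(1,3)] by (auto simp: doubleton_eq_iff)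
qed

lemma unicyclic_simple_graph: "unicyclic V E \<Longrightarrow> simple_graph V E"
  unfolding unicyclic_def by simp

lemma unicyclic_cycle_exists:
  assumes "unicyclic V E"
  obtains C where "is_cycle E C"
  using assms unfolding unicyclic_def by blast

lemma unicyclic_cycle_unique:
  "unicyclic V E \<Longrightarrow> is_cycle E C \<Longrightarrow> is_cycle E C' \<Longrightarrow> C' = C"
  unfolding unicyclic_def by (metis ex1E)

lemma unicyclic_cycle_vertices:
  assumes "unicyclic V E" and "is_cycle E C"
  shows "cycle_vertices E = \<Union>C"
proof -
  have "{\<Union>C' | C'. is_cycle E C'} = {\<Union>C}"
    using assms unicyclic_cycle_unique by blast
  then show ?thesis
    unfolding cycle_vertices_def by simp
qed

lemma unicyclic_off_cycle_edge_is_bridge: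
  assumes "unicyclic V E" and "is_cycle E C" and "{v, w} \<in> E" and "{v, w} \<notin> C"
  shows "\<not> reachable (E - {{v, w}}) w v"
proof
  assume reach: "reachable (E - {{v, w}}) w v"
  have "v \<noteq> w"
    using simple_graph_edge[OF unicyclic_simple_graph[OF assms(1)] assms(3)] by simp
  with assms(3) reach obtain C' where "is_cycle E C'" and "{v, w} \<in> C'"
    by (blast elim: cycle_through_edge)
  then show False
    using unicyclic_cycle_unique[OF assms(1,2)] assms(4) by blast
qed

lemma degree_gt_2_off_cycle_edge:
  assumes "simple_graph V E" and "is_cycle E C" and "degree E v > 2"
  obtains w where "{v, w} \<in> E" and "{v, w} \<notin> C"
proof -
  have "\<not> {e \<in> E. v \<in> e} \<subseteq> {e \<in> C. v \<in> e}"
  proof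
    assume "{e \<in> E. v \<in> e} \<subseteq> {e \<in> C. v \<in> e}"
    moreover have "finite {e \<in> C. v \<in> e}"
      using assms(2) simple_graph_finite_edges[OF assms(1)] unfolding is_cycle_def
      by (auto intro: finite_subset)
    ultimately have "degree E v \<le> card {e \<in> C. v \<in> e}"
      unfolding degree_def by (rule card_mono[rotated])
    then show False
      using cycle_degree_le_2[OF assms(2), of v] assms(3) by simp
  qed
  then obtain e where e: "e \<in> E" "v \<in> e" "e \<notin> C"
    by blast
  moreover obtain w where "e = {v, w}"
    using simple_graph_edge_at[OF assms(1) e(1,2)] by blast
  ultimately show ?thesis
    using that by simp
qed

lemma separating_edge_at_cycle_vertex:
  assumes U: "unicyclic V E" and u: "u \<in> cycle_vertices E" and v: "v \<in> cycle_vertices E"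
    and deg: "degree E v > 2"
  obtains w where "{v, w} \<in> E" and "\<not> reachable (E - {{v, w}}) w v"
    and "\<not> reachable (E - {{v, w}}) w u"
proof -
  obtain C where C: "is_cycle E C"
    using U by (rule unicyclic_cycle_exists)
  obtain w where vw: "{v, w} \<in> E" "{v, w} \<notin> C"
    using unicyclic_simple_graph[OF U] C deg by (rule degree_gt_2_off_cycle_edge)
  have wv: "\<not> reachable (E - {{v, w}}) w v"
    using unicyclic_off_cycle_edge_is_bridge[OF U C vw] .
  have "reachable (C - {{v, w}}) v u"
    using cycle_reachable_without_edge[OF C] u v unicyclic_cycle_vertices[OF U C] by simp
  moreover have "C - {{v, w}} \<subseteq> E - {{v, w}}"
    using C unfolding is_cycle_def by blast
  ultimately have vu: "reachable (E - {{v, w}}) v u"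
    by (simp add: reachable_mono)
  have "\<not> reachable (E - {{v, w}}) w u"
  proof
    assume "reachable (E - {{v, w}}) w u"
    then have "reachable (E - {{v, w}}) w v"
      by (rule reachable_trans[OF _ reachable_sym[OF vu]])
    with wv show False
      by simp
  qed
  with vw(1) wv show ?thesis
    by (rule that)
qed

lemma degree_ge_2_two_neighbours:
  assumes "simple_graph V E" and "degree E v \<ge> 2"
  obtains x y where "{v, x} \<in> E" and "{v, y} \<in> E" and "x \<noteq> y"
proof -
  have "\<not> card {e \<in> E. v \<in> e} \<le> Suc 0"
    using assms(2) unfolding degree_def by simp
  then obtain e1 e2 where e: "e1 \<in> E" "v \<in> e1" "e2 \<in> E" "v \<in> e2" "e1 \<noteq> e2"
    using simple_graph_finite_edges[OF assms(1)] by (auto simp: card_le_Suc0_iff_eq)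
  obtain x where "e1 = {v, x}"
    using simple_graph_edge_at[OF assms(1) e(1,2)] by blast
  moreover obtain y where "e2 = {v, y}"
    using simple_graph_edge_at[OF assms(1) e(3,4)] by blast
  ultimately show ?thesis
    using that e by auto
qed

lemma two_bridges_separate:
  assumes vx: "{v, x} \<in> E" and vy: "{v, y} \<in> E" and "x \<noteq> y"
    and bridge_x: "\<not> reachable (E - {{v, x}}) x v" and bridge_y: "\<not> reachable (E - {{v, y}}) y v"
  shows "\<not> reachable (E - {{v, x}}) x u \<or> \<not> reachable (E - {{v, y}}) y u"
proof (rule ccontr)
  let ?R = "E - {{v, x}} - {{v, y}}"
  assume "\<not> ?thesis"
  then have "reachable (E - {{v, x}}) x u" and "reachable (E - {{v, y}}) y u"
    by blast+
  then have xu: "reachable ?R x u" and "reachable (E - {{v, y}} - {{v, x}}) y u"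
    using bridge_x bridge_y by (blast intro: reachable_Diff_unreached_edge)+
  moreover have "E - {{v, y}} - {{v, x}} = ?R"
    by blast
  ultimately have yu: "reachable ?R y u"
    by simp
  have "reachable ?R x y"
    using reachable_trans[OF xu reachable_sym[OF yu]] .
  then have "reachable (E - {{v, x}}) x y"
    by (rule reachable_mono[rotated]) blast
  moreover have "{y, v} \<in> E - {{v, x}}"
    using vy \<open>x \<noteq> y\<close> by (auto simp: doubleton_eq_iff insert_commute)
  ultimately have "reachable (E - {{v, x}}) x v"
    by (rule reachable_trans[OF _ reachable_edge])
  with bridge_x show False
    by simp
qed

lemma separating_edge_at_off_cycle_vertex:
  assumes U: "unicyclic V E" and v: "v \<notin> cycle_vertices E" and deg: "degree E v \<ge> 2"
  obtains w where "{v, w} \<in> E" and "\<not> reachable (E - {{v, w}}) w v"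
    and "\<not> reachable (E - {{v, w}}) w u"
proof -
  obtain C where C: "is_cycle E C"
    using U by (rule unicyclic_cycle_exists)
  have bridge: "\<not> reachable (E - {{v, z}}) z v" if "{v, z} \<in> E" for z
  proof -
    have "{v, z} \<notin> C"
      using v unfolding unicyclic_cycle_vertices[OF U C] by blast
    with that show ?thesis
      by (rule unicyclic_off_cycle_edge_is_bridge[OF U C])
  qed
  obtain x y where vx: "{v, x} \<in> E" and vy: "{v, y} \<in> E" and "x \<noteq> y"
    using unicyclic_simple_graph[OF U] deg by (rule degree_ge_2_two_neighbours)
  have "\<not> reachable (E - {{v, x}}) x u \<or> \<not> reachable (E - {{v, y}}) y u"
    using vx vy \<open>x \<noteq> y\<close> bridge[OF vx] bridge[OF vy] by (rule two_bridges_separate)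
  then show ?thesis
  proof
    assume "\<not> reachable (E - {{v, x}}) x u"
    with vx bridge[OF vx] show ?thesis
      by (rule that)
  next
    assume "\<not> reachable (E - {{v, y}}) y u"
    with vy bridge[OF vy] show ?thesis
      by (rule that)
  qed
qed

locale leaf_bridge =
  fixes V :: "'a set" and E :: "'a set set" and l u v w :: 'a
  assumes unicyclic: "unicyclic V E"
    and leaf_edge: "{l, u} \<in> E"
    and leaf: "\<And>x. {l, x} \<in> E \<Longrightarrow> x = u"
    and bridge_edge: "{v, w} \<in> E"
    and u_ne_v: "u \<noteq> v"
    and v_off_w_side: "\<not> reachable (E - {{v, w}}) w v"
    and u_off_w_side: "\<not> reachable (E - {{v, w}}) w u"
begin

lemma distinct_vertices: "l \<noteq> u" "l \<noteq> v" "l \<noteq> w" "u \<noteq> w" "v \<noteq> w"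
proof -
  show "l \<noteq> u" "v \<noteq> w"
    using simple_graph_edge[OF unicyclic_simple_graph[OF unicyclic] leaf_edge]
      simple_graph_edge[OF unicyclic_simple_graph[OF unicyclic] bridge_edge] by simp_all
  show "u \<noteq> w"
    using u_off_w_side by auto
  then show "l \<noteq> v"
    using leaf[of w] bridge_edge by auto
  show "l \<noteq> w"
    using leaf[of v] bridge_edge u_ne_v by (auto simp: insert_commute)
qed

lemma l_off_w_side: "\<not> reachable (E - {{v, w}}) w l"
proof
  assume "reachable (E - {{v, w}}) w l"
  moreover have "{l, u} \<in> E - {{v, w}}"
    using leaf_edge distinct_vertices by (auto simp: doubleton_eq_iff)
  ultimately have "reachable (E - {{v, w}}) w u"
    by (rule reachable_trans[OF _ reachable_edge])
  with u_off_w_side show False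
    by simp
qed

lemma interchangeable_switch: "interchangeable E l u v w"
proof -
  have "{l, v} \<notin> E"
    using leaf[of v] u_ne_v by auto
  moreover have "{u, w} \<notin> E"
  proof
    assume "{u, w} \<in> E"
    moreover have "{u, w} \<noteq> {v, w}"
      using u_ne_v distinct_vertices by (simp add: doubleton_eq_iff)
    ultimately have "reachable (E - {{v, w}}) u w"
      by (simp add: reachable_edge)
    then show False
      using u_off_w_side by (auto dest: reachable_sym)
  qed
  moreover have "{l, u} \<inter> {v, w} = {}"
    using u_ne_v distinct_vertices by auto
  ultimately show ?thesis
    unfolding interchangeable_def using leaf_edge bridge_edge by simp
qed

lemma two_switch_eq: "two_switch E l u v w = E - {{l, u}, {v, w}} \<union> {{l, v}, {u, w}}"
  using interchangeable_switch unfolding two_switch_def by simp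

lemma reachable_two_switch_v_u: "reachable (two_switch E l u v w) v u"
proof -
  have "u \<in> V" "v \<in> V"
    using simple_graph_edge[OF unicyclic_simple_graph[OF unicyclic] leaf_edge]
      simple_graph_edge[OF unicyclic_simple_graph[OF unicyclic] bridge_edge] by simp_all
  then have "reachable E u v"
    using unicyclic unfolding unicyclic_def connected_graph_iff_reachable by simp
  moreover have "\<not> reachable (E - {{v, w}}) u w"
    using u_off_w_side by (auto dest: reachable_sym)
  ultimately have "reachable (E - {{v, w}}) v u"
    using reachable_Diff_edge_cases[of E u v v w] by (auto intro: reachable_sym)
  moreover have "\<not> reachable (E - {{v, w}} - {{l, u}}) v l"
  proof
    assume "reachable (E - {{v, w}} - {{l, u}}) v l"
    moreover have "{l, y} \<notin> E - {{v, w}} - {{l, u}}" for y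
      using leaf[of y] by auto
    ultimately have "v = l"
      by (blast intro: reachable_from_isolated reachable_sym)
    then show False
      using distinct_vertices by simp
  qed
  ultimately have "reachable (E - {{v, w}} - {{l, u}}) v u"
    using reachable_Diff_edge_cases[of "E - {{v, w}}" v u l u] by blast
  moreover have "E - {{v, w}} - {{l, u}} \<subseteq> two_switch E l u v w"
    unfolding two_switch_eq by blast
  ultimately show ?thesis
    by (rule reachable_mono[rotated])
qed

lemma connected_two_switch: "connected_graph V (two_switch E l u v w)"
proof -
  have "{l, v} \<in> two_switch E l u v w" and "{u, w} \<in> two_switch E l u v w"
    unfolding two_switch_eq by auto
  then have lu: "reachable (two_switch E l u v w) l u" and vw: "reachable (two_switch E l u v w) v w"
    using reachable_trans[OF reachable_edge reachable_two_switch_v_u]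
      reachable_trans[OF reachable_two_switch_v_u reachable_edge] by blast+
  have edge: "reachable (two_switch E l u v w) x y" if "{x, y} \<in> E" for x y
  proof -
    have "{x, y} \<in> two_switch E l u v w \<or> {x, y} = {l, u} \<or> {x, y} = {v, w}"
      using that unfolding two_switch_eq by blast
    then consider "{x, y} \<in> two_switch E l u v w" | "{x, y} = {l, u}" | "{x, y} = {v, w}"
      by blast
    then show ?thesis
    proof cases
      case 1
      then show ?thesis
        by (rule reachable_edge)
    next
      case 2
      then show ?thesis
        using lu reachable_sym[OF lu] by (auto simp: doubleton_eq_iff)
    next
      case 3
      then show ?thesis
        using vw reachable_sym[OF vw] by (auto simp: doubleton_eq_iff)
    qed
  qed
  have "reachable (two_switch E l u v w) x y" if "x \<in> V" "y \<in> V" for x y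
    by (rule reachable_simulate[OF _ edge])
      (use unicyclic that in \<open>auto simp: unicyclic_def connected_graph_iff_reachable\<close>)
  then show ?thesis
    unfolding connected_graph_iff_reachable by blast
qed

lemma cycle_avoids_removed_edges:
  assumes "is_cycle E C"
  shows "{l, u} \<notin> C" and "{v, w} \<notin> C"
proof
  assume "{l, u} \<in> C"
  then have "reachable (E - {{l, u}}) l u"
    by (rule reachable_without_cycle_edge[OF assms])
  moreover have "{l, y} \<notin> E - {{l, u}}" for y
    using leaf[of y] by auto
  ultimately have "u = l"
    by (rule reachable_from_isolated[rotated])
  then show False
    using distinct_vertices by simp
next
  show "{v, w} \<notin> C"
  proof
    assume "{v, w} \<in> C"
    then have "reachable (E - {{v, w}}) v w"
      by (rule reachable_without_cycle_edge[OF assms])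
    then show False
      using v_off_w_side by (auto dest: reachable_sym)
  qed
qed

lemma cycle_avoids_added_edges:
  assumes "is_cycle (two_switch E l u v w) C"
  shows "{l, v} \<notin> C" and "{u, w} \<notin> C"
proof
  assume "{l, v} \<in> C"
  then have "reachable (two_switch E l u v w - {{l, v}}) l v"
    by (rule reachable_without_cycle_edge[OF assms])
  moreover have "{l, y} \<notin> two_switch E l u v w - {{l, v}}" for y
    using leaf[of y] distinct_vertices unfolding two_switch_eq by (auto simp: doubleton_eq_iff)
  ultimately have "v = l"
    by (rule reachable_from_isolated[rotated])
  then show False
    using distinct_vertices by simp
next
  show "{u, w} \<notin> C"
  proof
    txt \<open>u w is the only edge of the switched graph leaving the side of w.\<close>
    let ?side = "{z. reachable (E - {{v, w}}) w z}"
    assume "{u, w} \<in> C"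
    then have "{w, u} \<in> C"
      by (simp add: insert_commute)
    then have "reachable (two_switch E l u v w - {{w, u}}) w u"
      by (rule reachable_without_cycle_edge[OF assms])
    then have "u \<in> ?side"
    proof (rule reachable_closed)
      fix x y
      assume xy: "{x, y} \<in> two_switch E l u v w - {{w, u}}" and x: "x \<in> ?side"
      have "x \<notin> {l, v}"
        using x l_off_w_side v_off_w_side by auto
      then have "{x, y} \<in> E - {{v, w}}"
        using xy unfolding two_switch_eq by (auto simp: insert_commute)
      then show "y \<in> ?side"
        using x reachable_trans[OF _ reachable_edge[OF \<open>{x, y} \<in> E - {{v, w}}\<close>]] by simp
    qed simp
    then show False
      using u_off_w_side by simp
  qed
qed

lemma is_cycle_two_switch_iff: "is_cycle (two_switch E l u v w) C \<longleftrightarrow> is_cycle E C"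
proof
  assume C: "is_cycle (two_switch E l u v w) C"
  then have "C \<subseteq> two_switch E l u v w"
    unfolding is_cycle_def by blast
  then have "C \<subseteq> E"
    using cycle_avoids_added_edges[OF C] unfolding two_switch_eq by blast
  with C show "is_cycle E C"
    by (rule is_cycle_mono)
next
  assume C: "is_cycle E C"
  then have "C \<subseteq> E"
    unfolding is_cycle_def by blast
  then have "C \<subseteq> two_switch E l u v w"
    using cycle_avoids_removed_edges[OF C] unfolding two_switch_eq by blast
  with C show "is_cycle (two_switch E l u v w) C"
    by (rule is_cycle_mono)
qed

lemma u_switch_moving_leaf: "u_switch V E l u v w \<and> {l, v} \<in> two_switch E l u v w"
proof -
  have "is_cycle (two_switch E l u v w) = is_cycle E"
    using is_cycle_two_switch_iff by blast
  then have "unicyclic V (two_switch E l u v w)"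
    using unicyclic simple_graph_two_switch[OF unicyclic_simple_graph[OF unicyclic]] connected_two_switch
    by (simp add: unicyclic_def)
  then show ?thesis
    unfolding u_switch_def using unicyclic interchangeable_switch two_switch_eq by simp
qed

end

theorem lemma3p3:
  fixes V :: "'a set" and E :: "'a set set" and l u :: 'a
  assumes "unicyclic V E"
    and "{l, u} \<in> E"
    and "degree E l = 1"
    and "u \<in> cycle_vertices E"
  shows "(\<forall>v. v \<in> cycle_vertices E \<and> v \<noteq> u \<and> degree E v > 2 \<longrightarrow>
            (\<exists>a b c d. u_switch V E a b c d \<and> {l, v} \<in> two_switch E a b c d))
       \<and> (\<forall>v. v \<in> V \<and> v \<notin> cycle_vertices E \<and> degree E v \<ge> 2 \<longrightarrow>
            (\<exists>a b c d. u_switch V E a b c d \<and> {l, v} \<in> two_switch E a b c d))"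
proof -
  have leaf: "\<And>x. {l, x} \<in> E \<Longrightarrow> x = u"
    using unicyclic_simple_graph[OF assms(1)] assms(3,2) by (rule degree_one_neighbour)
  have switch: "\<exists>a b c d. u_switch V E a b c d \<and> {l, v} \<in> two_switch E a b c d"
    if "{v, w} \<in> E" and "u \<noteq> v" and "\<not> reachable (E - {{v, w}}) w v"
      and "\<not> reachable (E - {{v, w}}) w u" for v w
    using leaf_bridge.u_switch_moving_leaf[OF leaf_bridge.intro[OF assms(1,2) leaf that]] by blast
  show ?thesis
  proof (intro conjI allI impI)
    fix v
    assume v: "v \<in> cycle_vertices E \<and> v \<noteq> u \<and> degree E v > 2"
    then obtain w where "{v, w} \<in> E" "\<not> reachable (E - {{v, w}}) w v"
      "\<not> reachable (E - {{v, w}}) w u"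
      using separating_edge_at_cycle_vertex[OF assms(1,4)] by blast
    then show "\<exists>a b c d. u_switch V E a b c d \<and> {l, v} \<in> two_switch E a b c d"
      using switch v by blast
  next
    fix v
    assume v: "v \<in> V \<and> v \<notin> cycle_vertices E \<and> degree E v \<ge> 2"
    then obtain w where "{v, w} \<in> E" "\<not> reachable (E - {{v, w}}) w v"
      "\<not> reachable (E - {{v, w}}) w u"
      using separating_edge_at_off_cycle_vertex[OF assms(1)] by blast
    moreover have "u \<noteq> v"
      using v assms(4) by blast
    ultimately show "\<exists>a b c d. u_switch V E a b c d \<and> {l, v} \<in> two_switch E a b c d"
      using switch by blast
  qed
qed

end
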